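(* Let $\Phi$ be a real, additive gain graph on $V=\{1,\dots,n\}$ and suppose $\mathbf{Q}=(Q_1,\dots,Q_n)\in(\mathbb{E}^d)^n$ has ideal general position. Let $s$ be a flat of $\mathcal{H}(\Phi;\mathbf{Q})$ that is not a point. Then for $i,j\in V$, $\mathrm{proj}_s Q_i=\mathrm{proj}_s Q_j$ if and only if $i$ and $j$ lie in the same connected component of $(V,E(s))$.
   Context: A real, additive gain graph $\Phi$ on $V$: finite graph with edge set $E$ (multiple edges allowed, every edge with two distinct endpoints) and gains $\phi(e;i,j)\in\mathbb{R}$ with $\phi(e;j,i)=-\phi(e;i,j)$. With $\psi_{ij}(P)=d(P,Q_i)^2-d(P,Q_j)^2$, $\mathcal{H}(\Phi;\mathbf{Q})$ consists of hyperplanes $h(e)=\{P:\psi_{ij}(P)=\phi(e;i,j)\}$ for edges $e$ with endpoints $i,j$. A flat of $\mathcal{H}$ is a nonempty intersection of a subset of $\mathcal{H}$; $E(s)=\{e\in E:h(e)\supseteq s\}$. $\mathrm{proj}_s P$ is the orthogonal projection of $P$ onto $s$. Ideal general position: the points are distinct and, with $\mathbb{E}^d\subset\mathbb{P}^d$, $h_\infty$ the ideal hyperplane and $p_{ij}$ the ideal point of line $Q_iQ_j$, for every set $T$ of unordered pairs the projective span of $\{p_{ij}:\{i,j\}\in T\}$ has dimension $\min(n-c(T),d)-1$, where $c(T)$ is the number of components of $(\{1,\dots,n\},T)$, isolated vertices included. *)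

theory Defs
  imports "HOL-Analysis.Analysis"
begin

text \<open>A real additive gain graph on V = {1..n}: a finite edge set E (of an arbitrary edge type),
  each edge e with an ordered pair of distinct endpoints ends e = (i,j) in V, and gain
  gain e = phi(e;i,j); the reverse orientation has gain phi(e;j,i) = - gain e.\<close>

definition gain_graph :: "nat \<Rightarrow> 'e set \<Rightarrow> ('e \<Rightarrow> nat \<times> nat) \<Rightarrow> bool" where
  "gain_graph n E ends \<longleftrightarrow> finite E \<and>
     (\<forall>e\<in>E. fst (ends e) \<in> {1..n} \<and> snd (ends e) \<in> {1..n} \<and> fst (ends e) \<noteq> snd (ends e))"

definition psi :: "(nat \<Rightarrow> 'a::euclidean_space) \<Rightarrow> nat \<Rightarrow> nat \<Rightarrow> 'a \<Rightarrow> real" where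
  "psi Q i j P = (dist P (Q i))\<^sup>2 - (dist P (Q j))\<^sup>2"

definition hyp :: "(nat \<Rightarrow> 'a::euclidean_space) \<Rightarrow> ('e \<Rightarrow> nat \<times> nat) \<Rightarrow> ('e \<Rightarrow> real) \<Rightarrow> 'e \<Rightarrow> 'a set" where
  "hyp Q ends gain e = {P. psi Q (fst (ends e)) (snd (ends e)) P = gain e}"

definition is_flat :: "(nat \<Rightarrow> 'a::euclidean_space) \<Rightarrow> 'e set \<Rightarrow> ('e \<Rightarrow> nat \<times> nat) \<Rightarrow> ('e \<Rightarrow> real) \<Rightarrow> 'a set \<Rightarrow> bool" where
  "is_flat Q E ends gain s \<longleftrightarrow> s \<noteq> {} \<and>
     (\<exists>F\<subseteq>E. s = (\<Inter>e\<in>F. hyp Q ends gain e))"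

definition edges_of :: "(nat \<Rightarrow> 'a::euclidean_space) \<Rightarrow> 'e set \<Rightarrow> ('e \<Rightarrow> nat \<times> nat) \<Rightarrow> ('e \<Rightarrow> real) \<Rightarrow> 'a set \<Rightarrow> 'e set" where
  "edges_of Q E ends gain s = {e\<in>E. s \<subseteq> hyp Q ends gain e}"

definition adj :: "'e set \<Rightarrow> ('e \<Rightarrow> nat \<times> nat) \<Rightarrow> (nat \<times> nat) set" where
  "adj F ends = {(a,b). \<exists>e\<in>F. ends e = (a,b) \<or> ends e = (b,a)}"

definition same_component :: "'e set \<Rightarrow> ('e \<Rightarrow> nat \<times> nat) \<Rightarrow> nat \<Rightarrow> nat \<Rightarrow> bool" where
  "same_component F ends i j \<longleftrightarrow> (i, j) \<in> (adj F ends)\<^sup>*"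

definition num_components :: "nat \<Rightarrow> nat set set \<Rightarrow> nat" where
  "num_components n T = card ({1..n} // ({(a,b). {a,b} \<in> T})\<^sup>*)"

text \<open>The ideal point p_ij of line Q_iQ_j is the direction class of Q_i - Q_j,
  so the projective span of {p_ij : {i,j} \<in> T} has projective dimension
  dim(span{Q_i - Q_j : {i,j}\<in>T}) - 1.  The condition is thus that this linear dimension equals
  min(n - c(T), d).\<close>
definition ideal_general_position :: "nat \<Rightarrow> (nat \<Rightarrow> 'a::euclidean_space) \<Rightarrow> bool" where
  "ideal_general_position n Q \<longleftrightarrow> inj_on Q {1..n} \<and>
     (\<forall>T. T \<subseteq> {{i,j} | i j. i \<in> {1..n} \<and> j \<in> {1..n} \<and> i \<noteq> j} \<longrightarrow>
        dim {Q i - Q j | i j. {i,j} \<in> T \<and> i \<noteq> j} = min (n - num_components n T) DIM('a))"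

end

theory Submission
  imports Defs
begin

text \<open>Each hyperplane h(e) of the arrangement is orthogonal to Q_a - Q_b, where a, b are the
  endpoints of e. Hence the directions of a flat s are exactly the vectors orthogonal to the span W
  of the differences Q_a - Q_b over the edges of E(s), and so proj_s Q_i = proj_s Q_j iff
  Q_i - Q_j \<in> W. A path in (V, E(s)) from i to j writes Q_i - Q_j as a sum of such differences.
  Conversely, if i and j are in different components, adding the pair {i,j} lowers the number of
  components, which by ideal general position raises the dimension of the span of differences;
  as s is not a point, dim W < d, so this dimension count forces Q_i - Q_j \<notin> W.\<close>

definition pair_rel :: "'v set set \<Rightarrow> ('v \<times> 'v) set" where
  "pair_rel T = {(a, b). {a, b} \<in> T}"

definition pair_diffs :: "('v \<Rightarrow> 'a::real_vector) \<Rightarrow> 'v set set \<Rightarrow> 'a set" where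
  "pair_diffs Q T = {Q a - Q b | a b. {a, b} \<in> T \<and> a \<noteq> b}"

definition edge_pairs :: "'e set \<Rightarrow> ('e \<Rightarrow> 'v \<times> 'v) \<Rightarrow> 'v set set" where
  "edge_pairs F ends = {{fst (ends e), snd (ends e)} | e. e \<in> F}"

lemma closest_point_eq_if_orthogonal_diffs:
  fixes S :: "'a::euclidean_space set"
  assumes "convex S" "closed S" "S \<noteq> {}"
    and orth: "\<And>p q. p \<in> S \<Longrightarrow> q \<in> S \<Longrightarrow> (x - y) \<bullet> (p - q) = 0"
  shows "closest_point S x = closest_point S y"
proof -
  define c where "c = closest_point S x"
  have c: "c \<in> S" unfolding c_def using assms(2,3) by (rule closest_point_in_set)
  have "dist y c \<le> dist y z" if z: "z \<in> S" for z
  proof -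
    have "(x - c) \<bullet> (z - c) \<le> 0"
      unfolding c_def using assms(1,2) z by (rule closest_point_dot)
    moreover have "(x - y) \<bullet> (z - c) = 0" using orth[OF z c] .
    ultimately have "0 \<le> (y - c) \<bullet> (c - z)"
      by (simp add: inner_diff_left inner_diff_right inner_commute)
    moreover have "(norm (y - z))\<^sup>2 = (norm (y - c))\<^sup>2 + (norm (c - z))\<^sup>2 + 2 * ((y - c) \<bullet> (c - z))"
      unfolding power2_norm_eq_inner
      by (simp add: inner_add_left inner_add_right inner_diff_left inner_diff_right inner_commute)
    ultimately have "(norm (y - c))\<^sup>2 \<le> (norm (y - z))\<^sup>2" by simp
    then show ?thesis by (simp add: dist_norm power2_le_iff_abs_le)
  qed
  then have "c = closest_point S y"
    using closest_point_unique[OF assms(1,2) c] by blast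
  then show ?thesis unfolding c_def .
qed

lemma closest_point_residual_orthogonal:
  fixes S :: "'a::euclidean_space set"
  assumes "convex S" "closed S" "S \<noteq> {}"
    and "\<And>p. p \<in> S \<Longrightarrow> p + v \<in> S" "\<And>p. p \<in> S \<Longrightarrow> p - v \<in> S"
  shows "(x - closest_point S x) \<bullet> v = 0"
proof -
  have c: "closest_point S x \<in> S" using assms(2,3) by (rule closest_point_in_set)
  have "(x - closest_point S x) \<bullet> (closest_point S x + v - closest_point S x) \<le> 0"
    "(x - closest_point S x) \<bullet> (closest_point S x - v - closest_point S x) \<le> 0"
    using closest_point_dot[OF assms(1,2)] assms(4,5)[OF c] by blast+
  then show ?thesis by (simp add: inner_minus_right)
qed

lemma span_neq_UNIV_if_orthogonal:
  fixes v :: "'a::real_inner"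
  assumes "v \<noteq> 0" "\<And>b. b \<in> B \<Longrightarrow> b \<bullet> v = 0"
  shows "span B \<noteq> UNIV"
proof
  assume "span B = UNIV"
  then have "orthogonal v v"
    using orthogonal_to_span[of v B v] assms(2) by (simp add: orthogonal_def inner_commute)
  with assms(1) show False by (simp add: orthogonal_def)
qed

lemma notin_span_orthogonal_witness:
  fixes x :: "'a::euclidean_space"
  assumes "x \<notin> span B"
  obtains z where "\<And>b. b \<in> B \<Longrightarrow> b \<bullet> z = 0" "x \<bullet> z \<noteq> 0"
proof -
  obtain y z where y: "y \<in> span B" and z: "\<And>w. w \<in> span B \<Longrightarrow> orthogonal z w"
    and x: "x = y + z"
    using orthogonal_subspace_decomp_exists by blast
  have "z \<noteq> 0" using assms x y by auto
  moreover have "x \<bullet> z = z \<bullet> z"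
    using z[OF y] x by (simp add: orthogonal_def inner_add_right inner_commute)
  ultimately have "x \<bullet> z \<noteq> 0" by simp
  moreover have "b \<bullet> z = 0" if "b \<in> B" for b
    using z[OF span_base[OF that]] by (simp add: orthogonal_def inner_commute)
  ultimately show ?thesis using that by blast
qed

lemma rtrancl_pair_rel_diff_in_span:
  assumes "(a, b) \<in> (pair_rel T)\<^sup>*"
  shows "Q a - Q b \<in> span (pair_diffs Q T)"
  using assms
proof (induction rule: rtrancl_induct)
  case base
  then show ?case by (simp add: span_zero)
next
  case (step b c)
  have "Q b - Q c \<in> span (pair_diffs Q T)"
  proof (cases "b = c")
    case False
    with step.hyps(2) have "Q b - Q c \<in> pair_diffs Q T"
      unfolding pair_rel_def pair_diffs_def by blast
    then show ?thesis by (rule span_base)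
  qed (simp add: span_zero)
  then have "(Q a - Q b) + (Q b - Q c) \<in> span (pair_diffs Q T)"
    using step.IH by (rule span_add[rotated])
  then show ?case by simp
qed

lemma card_quotient_le:
  assumes "finite A"
  shows "card (A // R) \<le> card A"
proof -
  have "A // R = (\<lambda>x. R `` {x}) ` A" unfolding quotient_def by auto
  then show ?thesis using card_image_le[OF assms] by simp
qed

lemma card_quotient_rtrancl_less:
  assumes "finite A" "X \<subseteq> X'" "sym X'" "(i, j) \<in> X'" "(i, j) \<notin> X\<^sup>*" "i \<in> A" "j \<in> A"
  shows "card (A // X'\<^sup>*) < card (A // X\<^sup>*)"
proof -
  define f where "f C = X'\<^sup>* `` C" for C
  have f_class: "f (X\<^sup>* `` {x}) = X'\<^sup>* `` {x}" for x
    using rtrancl_mono[OF assms(2)] unfolding f_def by (auto intro: rtrancl_trans)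
  have quot: "A // R = (\<lambda>x. R `` {x}) ` A" for R :: "('a \<times> 'a) set"
    unfolding quotient_def by auto
  have img: "A // X'\<^sup>* = f ` (A // X\<^sup>*)"
    unfolding quot image_image f_class ..
  have "(i, j) \<in> X'\<^sup>*" "(j, i) \<in> X'\<^sup>*"
    using assms(3,4) by (auto simp: sym_def)
  then have "f (X\<^sup>* `` {i}) = f (X\<^sup>* `` {j})"
    unfolding f_class by (auto intro: rtrancl_trans)
  moreover have "X\<^sup>* `` {i} \<noteq> X\<^sup>* `` {j}" using assms(5) by auto
  moreover have "X\<^sup>* `` {i} \<in> A // X\<^sup>*" "X\<^sup>* `` {j} \<in> A // X\<^sup>*"
    using assms(6,7) unfolding quot by auto
  ultimately have "\<not> inj_on f (A // X\<^sup>*)" by (metis inj_on_def)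
  moreover have fin: "finite (A // X\<^sup>*)" unfolding quot using assms(1) by simp
  ultimately have "card (f ` (A // X\<^sup>*)) \<noteq> card (A // X\<^sup>*)"
    using inj_on_iff_eq_card by blast
  with card_image_le[OF fin, of f] img show ?thesis by simp
qed

lemma num_components_le: "num_components n T \<le> n"
  unfolding num_components_def using card_quotient_le[of "{1..n}"] by simp

lemma num_components_insert_less:
  assumes "(i, j) \<notin> (pair_rel T)\<^sup>*" "i \<in> {1..n}" "j \<in> {1..n}"
  shows "num_components n (insert {i, j} T) < num_components n T"
proof -
  have "card ({1..n} // (pair_rel (insert {i, j} T))\<^sup>*) < card ({1..n} // (pair_rel T)\<^sup>*)"
    using card_quotient_rtrancl_less[of "{1..n}" "pair_rel T" "pair_rel (insert {i, j} T)" i j] assms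
    by (auto simp: pair_rel_def sym_def insert_commute)
  then show ?thesis unfolding num_components_def pair_rel_def .
qed

lemma ideal_general_position_diff_notin_span:
  fixes Q :: "nat \<Rightarrow> 'a::euclidean_space"
  assumes igp: "ideal_general_position n Q"
    and T: "T \<subseteq> {{i, j} | i j. i \<in> {1..n} \<and> j \<in> {1..n} \<and> i \<noteq> j}"
    and "i \<in> {1..n}" "j \<in> {1..n}" and nrel: "(i, j) \<notin> (pair_rel T)\<^sup>*"
    and proper: "span (pair_diffs Q T) \<noteq> UNIV"
  shows "Q i - Q j \<notin> span (pair_diffs Q T)"
proof
  assume ij: "Q i - Q j \<in> span (pair_diffs Q T)"
  let ?T' = "insert {i, j} T"
  have "i \<noteq> j" using nrel by auto
  then have T': "?T' \<subseteq> {{i, j} | i j. i \<in> {1..n} \<and> j \<in> {1..n} \<and> i \<noteq> j}"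
    using T assms(3,4) by blast
  have dim_T: "dim (pair_diffs Q T) = min (n - num_components n T) DIM('a)"
    using igp T unfolding ideal_general_position_def pair_diffs_def by blast
  have dim_T': "dim (pair_diffs Q ?T') = min (n - num_components n ?T') DIM('a)"
    using igp T' unfolding ideal_general_position_def pair_diffs_def by blast
  have "dim (pair_diffs Q T) < DIM('a)"
    using proper dim_eq_full[of "pair_diffs Q T"] dim_subset_UNIV[of "pair_diffs Q T"] by simp
  moreover have "num_components n ?T' < num_components n T"
    using num_components_insert_less nrel assms(3,4) .
  moreover have "pair_diffs Q ?T' \<subseteq> span (pair_diffs Q T)"
  proof
    fix w assume "w \<in> pair_diffs Q ?T'"
    then obtain a b where w: "w = Q a - Q b" "{a, b} \<in> ?T'" "a \<noteq> b"
      unfolding pair_diffs_def by blast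
    show "w \<in> span (pair_diffs Q T)"
    proof (cases "{a, b} = {i, j}")
      case True
      then have "w = Q i - Q j \<or> w = - (Q i - Q j)" using w by (auto simp: doubleton_eq_iff)
      then show ?thesis using ij span_neg[OF ij] by auto
    next
      case False
      then show ?thesis using w by (auto simp: pair_diffs_def intro: span_base)
    qed
  qed
  then have "dim (pair_diffs Q ?T') \<le> dim (pair_diffs Q T)"
    by (metis dim_span dim_subset)
  ultimately show False using dim_T dim_T' num_components_le[of n T] by linarith
qed

lemma psi_eq_inner:
  "psi Q a b P = -2 * (P \<bullet> (Q a - Q b)) + (Q a \<bullet> Q a - Q b \<bullet> Q b)"
  unfolding psi_def dist_norm power2_norm_eq_inner
  by (simp add: inner_diff_left inner_diff_right inner_commute algebra_simps)

lemma hyp_eq_hyperplane: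
  "hyp Q ends gain e = {P. (Q (fst (ends e)) - Q (snd (ends e))) \<bullet> P =
     (Q (fst (ends e)) \<bullet> Q (fst (ends e)) - Q (snd (ends e)) \<bullet> Q (snd (ends e)) - gain e) / 2}"
  unfolding hyp_def psi_eq_inner by (auto simp: inner_commute algebra_simps)

lemma closed_hyp: "closed (hyp Q ends gain e)"
  unfolding hyp_eq_hyperplane by (rule closed_hyperplane)

lemma convex_hyp: "convex (hyp Q ends gain e)"
  unfolding hyp_eq_hyperplane by (rule convex_hyperplane)

lemma
  assumes "is_flat Q E ends gain s"
  shows closed_flat: "closed s" and convex_flat: "convex s"
proof -
  obtain F where "s = (\<Inter>e\<in>F. hyp Q ends gain e)"
    using assms unfolding is_flat_def by blast
  then show "closed s" "convex s"
    using closed_hyp convex_hyp by (auto intro!: closed_Inter convex_Inter)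
qed

lemma hyp_diff_orthogonal:
  assumes "p \<in> hyp Q ends gain e" "q \<in> hyp Q ends gain e"
  shows "(Q (fst (ends e)) - Q (snd (ends e))) \<bullet> (p - q) = 0"
  using assms unfolding hyp_def psi_eq_inner
  by (simp add: inner_diff_left inner_diff_right inner_commute algebra_simps)

lemma hyp_translate:
  assumes "p \<in> hyp Q ends gain e" "(Q (fst (ends e)) - Q (snd (ends e))) \<bullet> v = 0"
  shows "p + v \<in> hyp Q ends gain e"
  using assms unfolding hyp_def psi_eq_inner by (simp add: inner_add_left inner_commute)

lemma edges_of_pair_diffs_orthogonal:
  assumes "w \<in> pair_diffs Q (edge_pairs (edges_of Q E ends gain s) ends)" "p \<in> s" "q \<in> s"
  shows "w \<bullet> (p - q) = 0"
proof -
  obtain e where e: "s \<subseteq> hyp Q ends gain e"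
    and w: "w = Q (fst (ends e)) - Q (snd (ends e)) \<or> w = Q (snd (ends e)) - Q (fst (ends e))"
    using assms(1) unfolding pair_diffs_def edge_pairs_def edges_of_def
    by (auto simp: doubleton_eq_iff)
  have "(Q (fst (ends e)) - Q (snd (ends e))) \<bullet> (p - q) = 0"
    using e assms(2,3) by (auto intro: hyp_diff_orthogonal)
  with w show ?thesis by (auto simp: inner_diff_left inner_diff_right)
qed

lemma flat_translate:
  assumes "is_flat Q E ends gain s" "p \<in> s"
    and orth: "\<And>w. w \<in> pair_diffs Q (edge_pairs (edges_of Q E ends gain s) ends) \<Longrightarrow> w \<bullet> v = 0"
  shows "p + v \<in> s"
proof -
  obtain F where F: "F \<subseteq> E" "s = (\<Inter>e\<in>F. hyp Q ends gain e)"
    using assms(1) unfolding is_flat_def by blast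
  have "p + v \<in> hyp Q ends gain e" if e: "e \<in> F" for e
  proof -
    have "(Q (fst (ends e)) - Q (snd (ends e))) \<bullet> v = 0"
    proof (cases "fst (ends e) = snd (ends e)")
      case False
      with e F show ?thesis
        by (intro orth) (auto simp: pair_diffs_def edge_pairs_def edges_of_def)
    qed simp
    moreover have "p \<in> hyp Q ends gain e" using assms(2) F(2) e by blast
    ultimately show ?thesis by (rule hyp_translate[rotated])
  qed
  then show ?thesis using F(2) by blast
qed

lemma adj_eq_pair_rel_edge_pairs: "adj F ends = pair_rel (edge_pairs F ends)"
  unfolding adj_def pair_rel_def edge_pairs_def by (auto simp: doubleton_eq_iff prod_eq_iff)

lemma edge_pairs_subset_pairs:
  assumes "gain_graph n E ends" "F \<subseteq> E"
  shows "edge_pairs F ends \<subseteq> {{i, j} | i j. i \<in> {1..n} \<and> j \<in> {1..n} \<and> i \<noteq> j}"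
  using assms unfolding gain_graph_def edge_pairs_def by blast

lemma flat_closest_point_eq_iff:
  fixes Q :: "nat \<Rightarrow> 'a::euclidean_space"
  assumes flat: "is_flat Q E ends gain s"
  shows "closest_point s x = closest_point s y \<longleftrightarrow>
    x - y \<in> span (pair_diffs Q (edge_pairs (edges_of Q E ends gain s) ends))"
    (is "_ \<longleftrightarrow> _ \<in> span ?W")
proof
  have s: "convex s" "closed s" "s \<noteq> {}"
    using closed_flat[OF flat] convex_flat[OF flat] flat unfolding is_flat_def by auto
  show "closest_point s x = closest_point s y" if xy: "x - y \<in> span ?W"
  proof (rule closest_point_eq_if_orthogonal_diffs[OF s])
    fix p q assume "p \<in> s" "q \<in> s"
    then show "(x - y) \<bullet> (p - q) = 0"
      using orthogonal_to_span[OF xy, of "p - q"] edges_of_pair_diffs_orthogonal[of _ Q E ends gain]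
      by (simp add: orthogonal_def inner_commute)
  qed
  show "x - y \<in> span ?W" if eq: "closest_point s x = closest_point s y"
  proof (rule ccontr)
    assume "x - y \<notin> span ?W"
    then obtain z where z: "\<And>w. w \<in> ?W \<Longrightarrow> w \<bullet> z = 0" and xy: "(x - y) \<bullet> z \<noteq> 0"
      by (elim notin_span_orthogonal_witness) blast
    have "(u - closest_point s u) \<bullet> z = 0" for u
    proof (rule closest_point_residual_orthogonal[OF s])
      show "p + z \<in> s" "p - z \<in> s" if "p \<in> s" for p
        using flat_translate[OF flat that, of z] flat_translate[OF flat that, of "- z"] z by auto
    qed
    from this[of x] this[of y] eq xy show False by (simp add: inner_diff_left)
  qed
qed

lemma flat_span_pair_diffs_neq_UNIV:
  assumes "is_flat Q E ends gain s" "\<not> (\<exists>p. s = {p})"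
  shows "span (pair_diffs Q (edge_pairs (edges_of Q E ends gain s) ends)) \<noteq> UNIV"
proof -
  obtain p q where "p \<in> s" "q \<in> s" "p \<noteq> q"
    using assms unfolding is_flat_def by blast
  then show ?thesis
    by (intro span_neq_UNIV_if_orthogonal[of "p - q"] edges_of_pair_diffs_orthogonal) auto
qed

theorem corollary6p16:
  fixes n :: nat and Q :: "nat \<Rightarrow> 'a::euclidean_space"
    and E :: "'e set" and ends :: "'e \<Rightarrow> nat \<times> nat" and gain :: "'e \<Rightarrow> real"
    and s :: "'a set" and i j :: nat
  assumes "gain_graph n E ends"
    and "ideal_general_position n Q"
    and "is_flat Q E ends gain s"
    and "\<not> (\<exists>p. s = {p})"
    and "i \<in> {1..n}" and "j \<in> {1..n}"
  shows "closest_point s (Q i) = closest_point s (Q j) \<longleftrightarrow>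
         same_component (edges_of Q E ends gain s) ends i j"
proof -
  let ?T = "edge_pairs (edges_of Q E ends gain s) ends"
  have T: "?T \<subseteq> {{i, j} | i j. i \<in> {1..n} \<and> j \<in> {1..n} \<and> i \<noteq> j}"
    using edge_pairs_subset_pairs[OF assms(1)] by (simp add: edges_of_def)
  have "closest_point s (Q i) = closest_point s (Q j) \<longleftrightarrow> Q i - Q j \<in> span (pair_diffs Q ?T)"
    using assms(3) by (rule flat_closest_point_eq_iff)
  also have "\<dots> \<longleftrightarrow> (i, j) \<in> (pair_rel ?T)\<^sup>*"
    using rtrancl_pair_rel_diff_in_span[of i j ?T Q] ideal_general_position_diff_notin_span[OF assms(2) T assms(5,6)]
      flat_span_pair_diffs_neq_UNIV[OF assms(3,4)] by blast
  also have "\<dots> \<longleftrightarrow> same_component (edges_of Q E ends gain s) ends i j"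
    unfolding same_component_def adj_eq_pair_rel_edge_pairs ..
  finally show ?thesis .
qed

end
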